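(* In the multi-parameter setting described in the context, equality $H(\theta)=C_\Upsilon(\theta)$ holds if and only if $\langle w_j^{(l)}(\theta)|w_k(\theta)\rangle=0$ for all $j,k,l$ with $p_j(\theta),p_k(\theta)>0$, where $|w_j^{(l)}\rangle=\partial|w_j\rangle/\partial\theta^l$.
   Context: A multi-parameter quantum channel on density matrices on $\mathbb{C}^d$ is $\rho_0\mapsto\sum_kE_k(\theta)\rho_0E_k(\theta)^\dagger$ with $\theta=(\theta^1,\dots,\theta^m)\in\mathbb{R}^m$, Kraus operators differentiable in $\theta$, $\sum_kE_k^\dagger E_k=I$. The input is a fixed pure state $\rho_0=|\psi_0\rangle\langle\psi_0|$. Canonical Kraus operators $\{\Upsilon_k(\theta)\}_{k=1}^d$: a differentiable Kraus representation of the same channel with $\mathrm{tr}\{\Upsilon_k\rho_0\Upsilon_j^\dagger\}=\delta_{jk}p_k(\theta)$; the output is $\rho_{out}(\theta)=\sum_kp_k|w_k\rangle\langle w_k|$ with $\{|w_k(\theta)\rangle\}$ an orthonormal basis differentiable in $\theta$ and $|w_k\rangle=p_k^{-1/2}\Upsilon_k|\psi_0\rangle$ when $p_k>0$. Write $X^{(j)}=\partial X/\partial\theta^j$. The SM bound matrix is $C_\Upsilon(\theta)_{jk}=4\sum_l\mathrm{Re}\,\mathrm{tr}\{\Upsilon_l^{(j)}\rho_0\Upsilon_l^{(k)\dagger}\}$; the SLD quantum information matrix is $H(\theta)_{jk}=\mathrm{Re}\,\mathrm{tr}\{\lambda^{(j)}\rho_{out}\lambda^{(k)}\}$, with $\lambda^{(j)}$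 a self-adjoint solution of $\partial\rho_{out}/\partial\theta^j=\frac12(\rho_{out}\lambda^{(j)}+\lambda^{(j)}\rho_{out})$. *)

theory Defs
  imports "HOL-Analysis.Analysis"
begin

text \<open>Complex d x d matrices are complex^'n^'n with d = CARD('n);
parameters theta range over real^'m with m = CARD('m).\<close>

definition cadj :: "complex^'n^'n \<Rightarrow> complex^'n^'n" where
  "cadj A = (\<chi> i j. cnj (A $ j $ i))"

definition ctrace :: "complex^'n^'n \<Rightarrow> complex" where
  "ctrace A = (\<Sum>i\<in>UNIV. A $ i $ i)"

definition braket :: "complex^'n \<Rightarrow> complex^'n \<Rightarrow> complex" where
  "braket u v = (\<Sum>i\<in>UNIV. cnj (u $ i) * v $ i)"

definition ketbra :: "complex^'n \<Rightarrow> complex^'n \<Rightarrow> complex^'n^'n" where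
  "ketbra u v = (\<chi> i j. u $ i * cnj (v $ j))"

definition pderiv_at :: "(real^'m \<Rightarrow> 'b::real_normed_vector) \<Rightarrow> real^'m \<Rightarrow> 'm \<Rightarrow> 'b" where
  "pderiv_at f x j = frechet_derivative f (at x) (axis j 1)"

definition out_state :: "('k::finite \<Rightarrow> real^'m \<Rightarrow> complex^'n^'n) \<Rightarrow> complex^'n^'n \<Rightarrow> real^'m \<Rightarrow> complex^'n^'n" where
  "out_state Y rho0 x = (\<Sum>k\<in>UNIV. Y k x ** rho0 ** cadj (Y k x))"

definition SM_bound :: "('k::finite \<Rightarrow> real^'m \<Rightarrow> complex^'n^'n) \<Rightarrow> complex^'n^'n \<Rightarrow> real^'m \<Rightarrow> real^'m^'m" where
  "SM_bound Y rho0 x = (\<chi> j k. 4 * (\<Sum>l\<in>UNIV.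
      Re (ctrace (pderiv_at (Y l) x j ** rho0 ** cadj (pderiv_at (Y l) x k)))))"

definition SLD_info :: "complex^'n^'n \<Rightarrow> ('m \<Rightarrow> complex^'n^'n) \<Rightarrow> real^'m^'m" where
  "SLD_info rho lam = (\<chi> j k. Re (ctrace (lam j ** rho ** lam k)))"

end

theory Submission
  imports Defs
begin

text \<open>Write \<open>Y c \<theta> *v psi0 = sqrt (p c) *s w c\<close> and let \<open>g l a c = braket (w a) (\<partial>\<^sub>l w c)\<close>,
  which is skew-Hermitian in \<open>a, c\<close> because the \<open>w c\<close> stay orthonormal. In the eigenbasis \<open>w\<close> of
  the output state, \<open>\<partial>\<^sub>l \<rho>\<close> has entries \<open>2 sqrt (p a) \<partial>\<^sub>l sqrt (p a)\<close> on the diagonal and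
  \<open>(p c - p a) g l a c\<close> off it, so the SLD has entries \<open>2 (\<partial>\<^sub>l \<rho>)\<^sub>a\<^sub>c / (p a + p c)\<close>. Both
  \<open>H\<close> and \<open>C\<^sub>\<Upsilon>\<close> then consist of the same classical Fisher term plus a term quadratic in \<open>g\<close>,
  and their difference is the weighted Gram matrix
  \<open>\<Sum>a c. 8 p a p c / (p a + p c) * Re (g j a c * cnj (g k a c))\<close>.
  Its weights are nonnegative and positive exactly when \<open>p a, p c > 0\<close>, so by looking at its
  diagonal it vanishes iff all those \<open>g l a c\<close> do.\<close>

lemma Re_of_real_mult: "Re (of_real r * z) = r * Re z"
  by simp

lemma cadj_component [simp]: "cadj A $ i $ j = cnj (A $ j $ i)"
  by (simp add: cadj_def)

lemma ketbra_sandwich: "A ** ketbra u v ** cadj B = ketbra (A *v u) (B *v v)"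
  by (simp add: vec_eq_iff ketbra_def matrix_matrix_mult_def matrix_vector_mult_def
      sum_distrib_left sum_distrib_right mult_ac)

lemma ctrace_ketbra: "ctrace (ketbra u v) = braket v u"
  by (simp add: ctrace_def ketbra_def braket_def mult.commute)

lemma ketbra_mult_vec: "ketbra u v *v x = braket v x *s u"
  by (simp add: vec_eq_iff ketbra_def matrix_vector_mult_def braket_def sum_distrib_left mult_ac)

lemma cnj_braket: "cnj (braket u v) = braket v u"
  by (simp add: braket_def mult.commute)

lemma braket_zero_right [simp]: "braket u 0 = 0"
  by (simp add: braket_def)

lemma braket_add_left: "braket (u + v) x = braket u x + braket v x"
  by (simp add: braket_def distrib_right sum.distrib)

lemma braket_add_right: "braket x (u + v) = braket x u + braket x v"
  by (simp add: braket_def distrib_left sum.distrib)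

lemma braket_smult_left: "braket (c *s u) v = cnj c * braket u v"
  by (simp add: braket_def sum_distrib_left mult_ac)

lemma braket_smult_right: "braket u (c *s v) = c * braket u v"
  by (simp add: braket_def sum_distrib_left mult_ac)

lemma braket_scaleR_left: "braket (r *\<^sub>R u) v = of_real r * braket u v"
  unfolding braket_def
  by (simp add: vector_scaleR_component) (simp add: scaleR_conv_of_real sum_distrib_left mult_ac)

lemma braket_scaleR_right: "braket u (r *\<^sub>R v) = of_real r * braket u v"
  unfolding braket_def
  by (simp add: vector_scaleR_component) (simp add: scaleR_conv_of_real sum_distrib_left mult_ac)

lemma braket_sum_right: "braket u (\<Sum>k\<in>S. f k) = (\<Sum>k\<in>S. braket u (f k))"
  by (induct S rule: infinite_finite_induct) (simp_all add: braket_add_right)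

lemma braket_adjoint: "braket u (A *v v) = braket (cadj A *v u) v"
  unfolding braket_def matrix_vector_mult_def
  by (simp add: sum_distrib_left sum_distrib_right mult_ac) (rule sum.swap)

lemma braket_self: "braket v v = of_real (\<Sum>i\<in>UNIV. (cmod (v $ i))\<^sup>2)"
  unfolding braket_def of_real_sum
  by (intro sum.cong refl) (simp add: complex_norm_square[symmetric] mult.commute[of "cnj _"])

lemma braket_self_nonneg: "0 \<le> Re (braket v v)"
  by (simp add: braket_self sum_nonneg)

lemma braket_self_eq_0_iff: "braket v v = 0 \<longleftrightarrow> v = 0"
proof
  assume "braket v v = 0"
  then have "(\<Sum>i\<in>UNIV. (cmod (v $ i))\<^sup>2) = 0"
    by (simp only: braket_self of_real_eq_0_iff)
  then show "v = 0"
    by (simp add: sum_nonneg_eq_0_iff vec_eq_iff)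
qed (simp add: braket_def)

lemma mult_vec_smult: "(A::complex^'n^'m) *v (c *s x) = c *s (A *v x)"
  by (simp add: vec_eq_iff matrix_vector_mult_def sum_distrib_left mult_ac)

lemma mult_vec_sum: "A *v (\<Sum>k\<in>S. f k) = (\<Sum>k\<in>S. A *v f k)"
  by (induct S rule: infinite_finite_induct) (simp_all add: matrix_vector_right_distrib)

lemma sum_mult_vec: "(\<Sum>k\<in>S. (M k::complex^'n^'m)) *v x = (\<Sum>k\<in>S. M k *v x)"
  by (induct S rule: infinite_finite_induct) (simp_all add: matrix_vector_mult_add_rdistrib)

lemma scaleR_mult_vec: "(r *\<^sub>R (A::complex^'n^'m)) *v x = r *\<^sub>R (A *v x)"
  unfolding vec_eq_iff matrix_vector_mult_def
  by (simp add: vector_scaleR_component) (simp add: scaleR_conv_of_real sum_distrib_left mult.assoc)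

subsection \<open>Orthonormal bases\<close>

locale orthonormal_basis =
  fixes b :: "'n::finite \<Rightarrow> complex^'n"
  assumes braket_basis: "braket (b j) (b k) = (if j = k then 1 else 0)"
begin

definition matrix_element :: "complex^'n^'n \<Rightarrow> 'n \<Rightarrow> 'n \<Rightarrow> complex" where
  "matrix_element M a c = braket (b a) (M *v b c)"

text \<open>The matrix with columns \<open>b a\<close> is unitary, and a one-sided inverse of a square matrix is
  two-sided; this turns orthonormality into completeness.\<close>
lemma basis_completeness: "(\<Sum>a\<in>UNIV. b a $ i * cnj (b a $ l)) = (if i = l then 1 else 0)"
proof -
  define W :: "complex^'n^'n" where "W = (\<chi> i a. b a $ i)"
  have "cadj W ** W = mat 1"
    using braket_basis by (simp add: vec_eq_iff W_def matrix_matrix_mult_def mat_def braket_def)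
  then have "W ** cadj W = mat 1"
    by (rule matrix_left_right_inverse1)
  then have "(W ** cadj W) $ i $ l = mat 1 $ i $ l"
    by simp
  then show ?thesis
    by (simp add: W_def matrix_matrix_mult_def mat_def)
qed

lemma basis_expansion: "x = (\<Sum>a\<in>UNIV. braket (b a) x *s b a)"
proof -
  have "x $ i = (\<Sum>l\<in>UNIV. (if i = l then 1 else 0) * x $ l)" for i
    by (simp add: if_distrib[of "\<lambda>t. t * _"] cong: if_cong)
  also have "\<dots> i = (\<Sum>a\<in>UNIV. braket (b a) x *s b a) $ i" for i
    unfolding basis_completeness[symmetric] sum_distrib_right
    by (subst sum.swap) (simp add: sum_component braket_def sum_distrib_left mult_ac)
  finally show ?thesis
    by (simp add: vec_eq_iff)
qed

lemma parseval: "braket x y = (\<Sum>a\<in>UNIV. cnj (braket (b a) x) * braket (b a) y)"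
proof -
  have "braket x y = (\<Sum>a\<in>UNIV. braket (b a) y * braket x (b a))"
    by (subst basis_expansion[of y]) (simp add: braket_sum_right braket_smult_right)
  then show ?thesis
    by (simp add: cnj_braket mult.commute)
qed

lemma ctrace_eq_sum_matrix_element: "ctrace M = (\<Sum>a\<in>UNIV. matrix_element M a a)"
proof -
  have "ctrace M = (\<Sum>i\<in>UNIV. \<Sum>l\<in>UNIV. M $ i $ l * (if l = i then 1 else 0))"
    by (simp add: ctrace_def if_distrib cong: if_cong)
  also have "\<dots> = (\<Sum>i\<in>UNIV. \<Sum>l\<in>UNIV. \<Sum>a\<in>UNIV. M $ i $ l * (b a $ l * cnj (b a $ i)))"
    by (simp only: basis_completeness[symmetric] sum_distrib_left)
  also have "\<dots> = (\<Sum>a\<in>UNIV. \<Sum>i\<in>UNIV. \<Sum>l\<in>UNIV. M $ i $ l * (b a $ l * cnj (b a $ i)))"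
    by (subst sum.swap) (intro sum.cong refl sum.swap)
  also have "\<dots> = (\<Sum>a\<in>UNIV. matrix_element M a a)"
    by (simp add: matrix_element_def braket_def matrix_vector_mult_def sum_distrib_left mult_ac)
  finally show ?thesis .
qed

lemma matrix_element_mult:
  "matrix_element (A ** B) a c = (\<Sum>d\<in>UNIV. matrix_element A a d * matrix_element B d c)"
proof -
  have "(A ** B) *v b c = (\<Sum>d\<in>UNIV. matrix_element B d c *s (A *v b d))"
    unfolding matrix_vector_mul_assoc[symmetric] matrix_element_def
    by (subst basis_expansion[of "B *v b c"]) (simp only: mult_vec_sum mult_vec_smult)
  then show ?thesis
    by (simp add: matrix_element_def braket_sum_right braket_smult_right mult.commute)
qed

lemma matrix_element_add: "matrix_element (A + B) a c = matrix_element A a c + matrix_element B a c"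
  by (simp add: matrix_element_def matrix_vector_mult_add_rdistrib braket_add_right)

lemma matrix_element_scaleR: "matrix_element (r *\<^sub>R A) a c = of_real r * matrix_element A a c"
  by (simp add: matrix_element_def scaleR_mult_vec braket_scaleR_right)

lemma matrix_element_cadj: "matrix_element (cadj A) a c = cnj (matrix_element A c a)"
  by (simp add: matrix_element_def braket_adjoint cnj_braket)

end

subsection \<open>Weighted double sums\<close>

lemma sum_sum_symmetrize_weight:
  fixes P :: "'a \<Rightarrow> real"
  assumes "\<And>a c. a \<in> A \<Longrightarrow> c \<in> A \<Longrightarrow> Z c a = Z a c"
  shows "(\<Sum>a\<in>A. \<Sum>c\<in>A. P c * Z a c) = (\<Sum>a\<in>A. \<Sum>c\<in>A. (P a + P c) / 2 * Z a c)"
proof -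
  have "(\<Sum>a\<in>A. \<Sum>c\<in>A. P c * Z a c) = (\<Sum>a\<in>A. \<Sum>c\<in>A. P a * Z a c)"
    using assms by (subst sum.swap) (intro sum.cong refl, simp)
  moreover have "(\<Sum>a\<in>A. \<Sum>c\<in>A. (P a + P c) / 2 * Z a c)
      = ((\<Sum>a\<in>A. \<Sum>c\<in>A. P a * Z a c) + (\<Sum>a\<in>A. \<Sum>c\<in>A. P c * Z a c)) / 2"
    by (simp add: sum.distrib sum_divide_distrib algebra_simps add_divide_distrib)
  ultimately show ?thesis
    by simp
qed

text \<open>At \<open>x = y = 0\<close> both sides are \<open>0\<close> because division by zero yields \<open>0\<close>.\<close>
lemma harmonic_weight_identity:
  fixes x y :: real
  assumes "0 \<le> x" "0 \<le> y"
  shows "2 * (x + y) - 2 * (y - x)\<^sup>2 / (x + y) = 8 * x * y / (x + y)"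
proof (cases "x + y = 0")
  case True
  with assms show ?thesis
    by simp
next
  case False
  then show ?thesis
    by (simp add: field_simps power2_eq_square)
qed

lemma weighted_gram_sums_eq_0_iff:
  fixes \<kappa> :: "'a \<Rightarrow> 'b \<Rightarrow> real" and g :: "'j \<Rightarrow> 'a \<Rightarrow> 'b \<Rightarrow> complex"
  assumes "finite A" "finite B" and \<kappa>_nonneg: "\<And>a c. 0 \<le> \<kappa> a c"
  shows "(\<forall>j k. (\<Sum>a\<in>A. \<Sum>c\<in>B. \<kappa> a c * Re (g j a c * cnj (g k a c))) = 0)
    \<longleftrightarrow> (\<forall>j a c. a \<in> A \<and> c \<in> B \<and> \<kappa> a c \<noteq> 0 \<longrightarrow> g j a c = 0)"
proof
  assume sums: "\<forall>j k. (\<Sum>a\<in>A. \<Sum>c\<in>B. \<kappa> a c * Re (g j a c * cnj (g k a c))) = 0"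
  show "\<forall>j a c. a \<in> A \<and> c \<in> B \<and> \<kappa> a c \<noteq> 0 \<longrightarrow> g j a c = 0"
  proof (intro allI impI)
    fix j a c
    assume ac: "a \<in> A \<and> c \<in> B \<and> \<kappa> a c \<noteq> 0"
    have diag: "\<kappa> a' c' * Re (g j a' c' * cnj (g j a' c')) = \<kappa> a' c' * (cmod (g j a' c'))\<^sup>2" for a' c'
      by (simp add: complex_norm_square[symmetric])
    have "(\<Sum>a'\<in>A. \<Sum>c'\<in>B. \<kappa> a' c' * (cmod (g j a' c'))\<^sup>2) = 0"
      using sums[rule_format, of j j] unfolding diag .
    then show "g j a c = 0"
      using ac assms(1,2) \<kappa>_nonneg by (auto simp: sum_nonneg_eq_0_iff sum_nonneg)
  qed
next
  assume vanish: "\<forall>j a c. a \<in> A \<and> c \<in> B \<and> \<kappa> a c \<noteq> 0 \<longrightarrow> g j a c = 0"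
  have "\<kappa> a c * Re (g j a c * cnj (g k a c)) = 0" if "a \<in> A" "c \<in> B" for j k a c
    using vanish that by (cases "\<kappa> a c = 0") auto
  then show "\<forall>j k. (\<Sum>a\<in>A. \<Sum>c\<in>B. \<kappa> a c * Re (g j a c * cnj (g k a c))) = 0"
    by (intro allI sum.neutral ballI) blast
qed

subsection \<open>Spectral data of the output state\<close>

text \<open>\<open>b\<close>, \<open>P\<close>, \<open>bd j\<close> and \<open>F j\<close> stand for the eigenvectors \<open>w\<close> and eigenvalues \<open>p\<close> of the output
  state at \<open>\<theta>\<close>, the partial derivatives \<open>\<partial>\<^sub>j w\<close>, and \<open>\<partial>\<^sub>j sqrt p\<close>; \<open>kraus_vec c\<close> plays the
  role of \<open>Y c \<theta> *v psi0\<close> and \<open>kraus_vec_deriv j c\<close> that of its \<open>j\<close>-th partial derivative.\<close>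

locale spectral_derivative = orthonormal_basis b for b :: "'n::finite \<Rightarrow> complex^'n" +
  fixes P :: "'n \<Rightarrow> real"
    and bd :: "'m \<Rightarrow> 'n \<Rightarrow> complex^'n"
    and F :: "'m \<Rightarrow> 'n \<Rightarrow> real"
  assumes P_nonneg: "0 \<le> P a"
    and basis_deriv_skew: "braket (b a) (bd j c) + braket (bd j a) (b c) = 0"
    and F_vanish: "P a = 0 \<Longrightarrow> F j a = 0"
begin

definition kraus_vec :: "'n \<Rightarrow> complex^'n" where
  "kraus_vec c = of_real (sqrt (P c)) *s b c"

definition kraus_vec_deriv :: "'m \<Rightarrow> 'n \<Rightarrow> complex^'n" where
  "kraus_vec_deriv j c = of_real (sqrt (P c)) *s bd j c + of_real (F j c) *s b c"

definition state :: "complex^'n^'n" where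
  "state = (\<Sum>c\<in>UNIV. ketbra (kraus_vec c) (kraus_vec c))"

definition state_deriv :: "'m \<Rightarrow> complex^'n^'n" where
  "state_deriv j = (\<Sum>c\<in>UNIV. ketbra (kraus_vec c) (kraus_vec_deriv j c)
                             + ketbra (kraus_vec_deriv j c) (kraus_vec c))"

definition connection :: "'m \<Rightarrow> 'n \<Rightarrow> 'n \<Rightarrow> complex" where
  "connection j a c = braket (b a) (bd j c)"

definition connection_gram :: "'m \<Rightarrow> 'm \<Rightarrow> 'n \<Rightarrow> 'n \<Rightarrow> real" where
  "connection_gram j k a c = Re (connection j a c * cnj (connection k a c))"

lemma of_real_sqrt_P_square: "of_real (sqrt (P a)) * of_real (sqrt (P a)) = (of_real (P a) :: complex)"
  using P_nonneg by (simp flip: of_real_mult)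

lemma braket_basis_deriv_basis: "braket (bd j c) (b a) = - connection j c a"
  using basis_deriv_skew[of c j a] by (metis connection_def minus_unique)

lemma connection_skew: "connection j c a = - cnj (connection j a c)"
  using braket_basis_deriv_basis[of j c a] by (simp add: connection_def cnj_braket)

lemma Re_connection_diag: "Re (connection j a a) = 0"
  using connection_skew[of j a a] by (simp add: complex_eq_iff)

lemma connection_gram_swap: "connection_gram j k c a = connection_gram j k a c"
  by (simp add: connection_gram_def connection_skew[of _ c a])

lemma braket_basis_kraus_vec: "braket (b a) (kraus_vec c) = (if a = c then of_real (sqrt (P c)) else 0)"
  by (simp add: kraus_vec_def braket_smult_right braket_basis)

lemma braket_kraus_vec_basis: "braket (kraus_vec c) (b a) = (if c = a then of_real (sqrt (P c)) else 0)"
  by (simp add: kraus_vec_def braket_smult_left braket_basis)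

lemma braket_basis_kraus_vec_deriv:
  "braket (b a) (kraus_vec_deriv j c)
     = of_real (sqrt (P c)) * connection j a c + (if a = c then of_real (F j c) else 0)"
  by (simp add: kraus_vec_deriv_def braket_add_right braket_smult_right braket_basis connection_def)

lemma braket_kraus_vec_deriv_basis:
  "braket (kraus_vec_deriv j c) (b a)
     = - of_real (sqrt (P c)) * connection j c a + (if c = a then of_real (F j c) else 0)"
  by (simp add: kraus_vec_deriv_def braket_add_left braket_smult_left braket_basis
      braket_basis_deriv_basis)

lemma matrix_element_state: "matrix_element state a c = (if a = c then of_real (P a) else 0)"
  by (simp add: state_def matrix_element_def sum_mult_vec ketbra_mult_vec braket_sum_right
      braket_smult_right braket_basis_kraus_vec braket_kraus_vec_basis if_distrib[of "\<lambda>t. t * _"]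
      of_real_sqrt_P_square cong: if_cong)

lemma matrix_element_state_deriv:
  "matrix_element (state_deriv j) a c
     = (if a = c then of_real (2 * sqrt (P a) * F j a) else 0) + of_real (P c - P a) * connection j a c"
proof -
  have "matrix_element (state_deriv j) a c
      = braket (kraus_vec_deriv j a) (b c) * of_real (sqrt (P a))
        + of_real (sqrt (P c)) * braket (b a) (kraus_vec_deriv j c)"
    by (simp add: state_deriv_def matrix_element_def sum_mult_vec matrix_vector_mult_add_rdistrib
        ketbra_mult_vec braket_sum_right braket_add_right braket_smult_right sum.distrib
        braket_basis_kraus_vec braket_kraus_vec_basis if_distrib[of "\<lambda>t. _ * t"]
        if_distrib[of "\<lambda>t. t * _"] cong: if_cong)
  also have "\<dots> = (of_real (sqrt (P c)) * of_real (sqrt (P c))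
        - of_real (sqrt (P a)) * of_real (sqrt (P a))) * connection j a c + (if a = c then 2 * of_real (sqrt (P a)) * of_real (F j a) else 0)"
    by (cases "a = c") (simp_all add: braket_kraus_vec_deriv_basis braket_basis_kraus_vec_deriv
        algebra_simps)
  finally show ?thesis
    by (simp add: of_real_sqrt_P_square)
qed

lemma Re_matrix_element_state_deriv_gram:
  "Re (matrix_element (state_deriv j) a c * cnj (matrix_element (state_deriv k) a c))
     = (if a = c then 4 * P a * (F j a * F k a) else 0) + (P c - P a)\<^sup>2 * connection_gram j k a c"
  by (cases "a = c") (simp_all add: matrix_element_state_deriv connection_gram_def power2_eq_square
      P_nonneg algebra_simps)

lemma braket_kraus_vec_deriv:
  "braket (kraus_vec_deriv k c) (kraus_vec_deriv j c)
     = of_real (P c) * braket (bd k c) (bd j c) - of_real (sqrt (P c) * F j c) * connection k c c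
       + of_real (sqrt (P c) * F k c) * connection j c c + of_real (F k c * F j c)"
  unfolding kraus_vec_deriv_def
  by (simp add: braket_add_left braket_add_right braket_smult_left braket_smult_right braket_basis
      braket_basis_deriv_basis connection_def[symmetric])
    (simp add: of_real_sqrt_P_square[symmetric] algebra_simps)

lemma Re_braket_kraus_vec_deriv:
  "Re (braket (kraus_vec_deriv k c) (kraus_vec_deriv j c))
     = F j c * F k c + P c * (\<Sum>a\<in>UNIV. connection_gram j k a c)"
proof -
  have "Re (braket (bd k c) (bd j c)) = (\<Sum>a\<in>UNIV. connection_gram j k a c)"
    unfolding parseval[of "bd k c" "bd j c"] Re_sum
    by (simp add: connection_gram_def connection_def mult.commute)
  then show ?thesis
    by (simp add: braket_kraus_vec_deriv Re_connection_diag)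
qed

lemma sum_Re_braket_kraus_vec_deriv:
  "4 * (\<Sum>c\<in>UNIV. Re (braket (kraus_vec_deriv k c) (kraus_vec_deriv j c)))
     = (\<Sum>c\<in>UNIV. 4 * (F j c * F k c))
       + (\<Sum>a\<in>UNIV. \<Sum>c\<in>UNIV. 2 * (P a + P c) * connection_gram j k a c)"
proof -
  have "(\<Sum>c\<in>UNIV. P c * (\<Sum>a\<in>UNIV. connection_gram j k a c))
      = (\<Sum>a\<in>UNIV. \<Sum>c\<in>UNIV. P c * connection_gram j k a c)"
    by (simp add: sum_distrib_left) (rule sum.swap)
  also have "\<dots> = (\<Sum>a\<in>UNIV. \<Sum>c\<in>UNIV. (P a + P c) / 2 * connection_gram j k a c)"
    by (rule sum_sum_symmetrize_weight) (rule connection_gram_swap)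
  finally have symmetrized: "(\<Sum>c\<in>UNIV. P c * (\<Sum>a\<in>UNIV. connection_gram j k a c))
      = (\<Sum>a\<in>UNIV. \<Sum>c\<in>UNIV. (P a + P c) / 2 * connection_gram j k a c)" .
  have "4 * (\<Sum>c\<in>UNIV. P c * (\<Sum>a\<in>UNIV. connection_gram j k a c))
      = (\<Sum>a\<in>UNIV. \<Sum>c\<in>UNIV. 2 * (P a + P c) * connection_gram j k a c)"
    unfolding symmetrized by (simp only: sum_distrib_left) (intro sum.cong refl, simp)
  then show ?thesis
    by (simp add: Re_braket_kraus_vec_deriv sum.distrib distrib_left sum_distrib_left[symmetric])
qed

end

locale sld_spectral = spectral_derivative b P bd F
  for b :: "'n::finite \<Rightarrow> complex^'n" and P and bd :: "'m::finite \<Rightarrow> 'n \<Rightarrow> complex^'n" and F +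
  fixes lam :: "'m \<Rightarrow> complex^'n^'n"
  assumes lam_selfadjoint: "cadj (lam j) = lam j"
    and state_deriv_sld: "state_deriv j = (1/2::real) *\<^sub>R (state ** lam j + lam j ** state)"
begin

lemma matrix_element_state_deriv_sld:
  "matrix_element (state_deriv j) a c = of_real ((P a + P c) / 2) * matrix_element (lam j) a c"
proof -
  have "matrix_element (state ** lam j) a c = of_real (P a) * matrix_element (lam j) a c"
    "matrix_element (lam j ** state) a c = matrix_element (lam j) a c * of_real (P c)"
    by (simp_all add: matrix_element_mult matrix_element_state if_distrib[of "\<lambda>t. t * _"]
        if_distrib[of "\<lambda>t. _ * t"] cong: if_cong)
  then show ?thesis
    by (simp add: state_deriv_sld matrix_element_scaleR matrix_element_add algebra_simps)
qed

lemma matrix_element_lam_swap: "matrix_element (lam j) c a = cnj (matrix_element (lam j) a c)"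
  using matrix_element_cadj[of "lam j" c a] by (simp add: lam_selfadjoint)

lemma SLD_info_component:
  "SLD_info state lam $ j $ k
     = (\<Sum>a\<in>UNIV. \<Sum>c\<in>UNIV. P c * Re (matrix_element (lam j) a c * cnj (matrix_element (lam k) a c)))"
proof -
  have lam_state:
    "matrix_element (lam j ** state) a c = matrix_element (lam j) a c * of_real (P c)" for a c
    by (simp add: matrix_element_mult matrix_element_state if_distrib[of "\<lambda>t. _ * t"] cong: if_cong)
  have swap: "matrix_element (lam j) a c * of_real (P c) * matrix_element (lam k) c a
      = of_real (P c) * (matrix_element (lam j) a c * cnj (matrix_element (lam k) a c))" for a c
    by (simp add: matrix_element_lam_swap[of k c a])
  have "SLD_info state lam $ j $ k = Re (\<Sum>a\<in>UNIV. \<Sum>c\<in>UNIV.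
      matrix_element (lam j) a c * of_real (P c) * matrix_element (lam k) c a)"
    unfolding SLD_info_def vec_lambda_beta ctrace_eq_sum_matrix_element
      matrix_element_mult[of "lam j ** state"] lam_state ..
  then show ?thesis
    by (simp only: swap Re_sum Re_of_real_mult)
qed

lemma weighted_sld_gram:
  "(P a + P c) / 2 * Re (matrix_element (lam j) a c * cnj (matrix_element (lam k) a c))
     = (if a = c then 4 * (F j a * F k a) else 0)
       + 2 * (P c - P a)\<^sup>2 / (P a + P c) * connection_gram j k a c"
proof (cases "P a + P c = 0")
  case True
  then have "P a = 0" "P c = 0"
    using P_nonneg[of a] P_nonneg[of c] by linarith+
  then show ?thesis
    by (simp add: F_vanish)
next
  case False
  define S where "S = P a + P c"
  have lam_state_deriv:
    "matrix_element (lam i) a c = of_real (2 / S) * matrix_element (state_deriv i) a c" for i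
    using False by (simp add: S_def matrix_element_state_deriv_sld flip: of_real_add)
  have lam_gram: "matrix_element (lam j) a c * cnj (matrix_element (lam k) a c)
      = of_real ((2 / S)\<^sup>2)
        * (matrix_element (state_deriv j) a c * cnj (matrix_element (state_deriv k) a c))"
    by (simp add: lam_state_deriv power2_eq_square mult_ac)
  have "S \<noteq> 0"
    using False by (simp add: S_def)
  then have weight: "S / 2 * (2 / S)\<^sup>2 = 2 / S"
    by (simp add: power2_eq_square field_simps)
  have "(P a + P c) / 2 * Re (matrix_element (lam j) a c * cnj (matrix_element (lam k) a c))
      = 2 / S * Re (matrix_element (state_deriv j) a c * cnj (matrix_element (state_deriv k) a c))"
    unfolding lam_gram Re_of_real_mult S_def[symmetric] by (simp only: mult.assoc[symmetric] weight)
  also have "\<dots> = 2 / S * ((if a = c then 4 * P a * (F j a * F k a) else 0)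
      + (P c - P a)\<^sup>2 * connection_gram j k a c)"
    by (simp only: Re_matrix_element_state_deriv_gram)
  also have "\<dots> = (if a = c then 4 * (F j a * F k a) else 0)
      + 2 * (P c - P a)\<^sup>2 / (P a + P c) * connection_gram j k a c"
    using False by (cases "a = c") (simp_all add: S_def field_simps)
  finally show ?thesis .
qed

lemma SLD_info_component_eq:
  "SLD_info state lam $ j $ k
     = (\<Sum>c\<in>UNIV. 4 * (F j c * F k c))
       + (\<Sum>a\<in>UNIV. \<Sum>c\<in>UNIV. 2 * (P c - P a)\<^sup>2 / (P a + P c) * connection_gram j k a c)"
proof -
  have "SLD_info state lam $ j $ k = (\<Sum>a\<in>UNIV. \<Sum>c\<in>UNIV.
      (P a + P c) / 2 * Re (matrix_element (lam j) a c * cnj (matrix_element (lam k) a c)))"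
    unfolding SLD_info_component
  proof (rule sum_sum_symmetrize_weight)
    fix a c
    show "Re (matrix_element (lam j) c a * cnj (matrix_element (lam k) c a))
        = Re (matrix_element (lam j) a c * cnj (matrix_element (lam k) a c))"
      by (simp add: matrix_element_lam_swap[of _ c a])
  qed
  also have "\<dots> = (\<Sum>a\<in>UNIV. \<Sum>c\<in>UNIV. (if a = c then 4 * (F j a * F k a) else 0)
      + 2 * (P c - P a)\<^sup>2 / (P a + P c) * connection_gram j k a c)"
    unfolding weighted_sld_gram ..
  finally show ?thesis
    by (simp add: sum.distrib)
qed

lemma SM_minus_SLD_info:
  "4 * (\<Sum>c\<in>UNIV. Re (braket (kraus_vec_deriv k c) (kraus_vec_deriv j c))) - SLD_info state lam $ j $ k
     = (\<Sum>a\<in>UNIV. \<Sum>c\<in>UNIV. 8 * P a * P c / (P a + P c) * connection_gram j k a c)"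
proof -
  have weight: "2 * (P a + P c) * connection_gram j k a c
      - 2 * (P c - P a)\<^sup>2 / (P a + P c) * connection_gram j k a c
      = 8 * P a * P c / (P a + P c) * connection_gram j k a c" for a c
    by (simp only: left_diff_distrib[symmetric] harmonic_weight_identity[OF P_nonneg P_nonneg])
  show ?thesis
    unfolding sum_Re_braket_kraus_vec_deriv SLD_info_component_eq add_diff_cancel_left
      sum_subtractf[symmetric] weight ..
qed

theorem SLD_info_eq_SM_iff:
  "SLD_info state lam = (\<chi> j k. 4 * (\<Sum>c\<in>UNIV. Re (braket (kraus_vec_deriv k c) (kraus_vec_deriv j c))))
     \<longleftrightarrow> (\<forall>j a c. 0 < P a \<and> 0 < P c \<longrightarrow> connection j a c = 0)"
proof -
  define \<kappa> where "\<kappa> a c = 8 * P a * P c / (P a + P c)" for a c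
  have \<kappa>_nonneg: "0 \<le> \<kappa> a c" for a c
    using P_nonneg[of a] P_nonneg[of c] by (simp add: \<kappa>_def)
  have \<kappa>_eq_0_iff: "\<kappa> a c = 0 \<longleftrightarrow> \<not> (0 < P a \<and> 0 < P c)" for a c
    using P_nonneg[of a] P_nonneg[of c] by (auto simp: \<kappa>_def add_nonneg_eq_0_iff)
  have "SLD_info state lam
        = (\<chi> j k. 4 * (\<Sum>c\<in>UNIV. Re (braket (kraus_vec_deriv k c) (kraus_vec_deriv j c))))
      \<longleftrightarrow> (\<forall>j k. (\<Sum>a\<in>UNIV. \<Sum>c\<in>UNIV. \<kappa> a c * Re (connection j a c * cnj (connection k a c))) = 0)"
    unfolding \<kappa>_def connection_gram_def[symmetric] SM_minus_SLD_info[symmetric]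
    by (auto simp: vec_eq_iff)
  also have "\<dots> \<longleftrightarrow> (\<forall>j a c. a \<in> UNIV \<and> c \<in> UNIV \<and> \<kappa> a c \<noteq> 0 \<longrightarrow> connection j a c = 0)"
    by (rule weighted_gram_sums_eq_0_iff) (simp_all add: \<kappa>_nonneg)
  finally show ?thesis
    by (simp add: \<kappa>_eq_0_iff)
qed

end

subsection \<open>Partial derivatives\<close>

lemma smult_of_real: "of_real r *s (u::complex^'n) = r *\<^sub>R u"
  by (simp add: vec_eq_iff vector_scaleR_component) (simp add: scaleR_conv_of_real)

lemma bounded_bilinear_braket: "bounded_bilinear (braket :: complex^'n \<Rightarrow> complex^'n \<Rightarrow> complex)"
  unfolding bilinear_conv_bounded_bilinear[symmetric] bilinear_def
  by (auto intro!: linearI simp: braket_add_left braket_add_right braket_scaleR_left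
      braket_scaleR_right scaleR_conv_of_real[where 'a=complex])

lemma bounded_bilinear_ketbra: "bounded_bilinear (ketbra :: complex^'n \<Rightarrow> complex^'n \<Rightarrow> complex^'n^'n)"
  unfolding bilinear_conv_bounded_bilinear[symmetric] bilinear_def
  by (auto intro!: linearI simp: ketbra_def vec_eq_iff distrib_left distrib_right
      scaleR_conv_of_real[where 'a=complex] vector_scaleR_component mult_ac)

lemma bounded_linear_mult_vec_left: "bounded_linear (\<lambda>A::complex^'n^'m. A *v x)"
  unfolding linear_conv_bounded_linear[symmetric]
  by (auto intro!: linearI simp: matrix_vector_mult_add_rdistrib scaleR_mult_vec)

lemma pderiv_at_has_derivative: "(f has_derivative D) (at x) \<Longrightarrow> pderiv_at f x j = D (axis j 1)"
  unfolding pderiv_at_def by (metis frechet_derivative_at)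

lemma pderiv_at_const:
  assumes "\<And>y. f y = c"
  shows "pderiv_at f x j = 0"
proof -
  have "f = (\<lambda>y. c)"
    using assms by blast
  then show ?thesis
    by (simp add: pderiv_at_def)
qed

lemma
  assumes "bounded_linear L" "f differentiable (at x)"
  shows differentiable_linear: "(\<lambda>y. L (f y)) differentiable (at x)"
    and pderiv_at_linear: "pderiv_at (\<lambda>y. L (f y)) x j = L (pderiv_at f x j)"
proof -
  have "((\<lambda>y. L (f y)) has_derivative (\<lambda>h. L (frechet_derivative f (at x) h))) (at x)"
    using assms(2)
    by (intro bounded_linear.has_derivative[OF assms(1)]) (simp add: frechet_derivative_works[symmetric])
  then show "(\<lambda>y. L (f y)) differentiable (at x)"
    by (rule differentiableI)
  from pderiv_at_has_derivative[OF \<open>(_ has_derivative _) _\<close>]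
  show "pderiv_at (\<lambda>y. L (f y)) x j = L (pderiv_at f x j)"
    by (simp add: pderiv_at_def)
qed

lemma
  assumes "bounded_bilinear B" "f differentiable (at x)" "g differentiable (at x)"
  shows differentiable_bilinear: "(\<lambda>y. B (f y) (g y)) differentiable (at x)"
    and pderiv_at_bilinear: "pderiv_at (\<lambda>y. B (f y) (g y)) x j
      = B (f x) (pderiv_at g x j) + B (pderiv_at f x j) (g x)"
proof -
  have "((\<lambda>y. B (f y) (g y)) has_derivative
      (\<lambda>h. B (f x) (frechet_derivative g (at x) h) + B (frechet_derivative f (at x) h) (g x))) (at x)"
    using assms(2,3)
    by (intro bounded_bilinear.FDERIV[OF assms(1)]) (simp_all add: frechet_derivative_works[symmetric])
  then show "(\<lambda>y. B (f y) (g y)) differentiable (at x)"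
    by (rule differentiableI)
  from pderiv_at_has_derivative[OF \<open>(_ has_derivative _) _\<close>]
  show "pderiv_at (\<lambda>y. B (f y) (g y)) x j = B (f x) (pderiv_at g x j) + B (pderiv_at f x j) (g x)"
    by (simp add: pderiv_at_def)
qed

lemma pderiv_at_sum:
  assumes "finite S" "\<And>k. k \<in> S \<Longrightarrow> f k differentiable (at x)"
  shows "pderiv_at (\<lambda>y. \<Sum>k\<in>S. f k y) x j = (\<Sum>k\<in>S. pderiv_at (f k) x j)"
proof -
  have "((\<lambda>y. \<Sum>k\<in>S. f k y) has_derivative (\<lambda>h. \<Sum>k\<in>S. frechet_derivative (f k) (at x) h)) (at x)"
    using assms by (intro has_derivative_sum) (simp add: frechet_derivative_works[symmetric])
  from pderiv_at_has_derivative[OF this] show ?thesis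
    by (simp add: pderiv_at_def)
qed

lemma pderiv_at_minimum:
  fixes r :: "real^'m \<Rightarrow> real"
  assumes "\<And>y. r x \<le> r y" "r differentiable (at x)"
  shows "pderiv_at r x j = 0"
proof -
  have "frechet_derivative r (at x) = (\<lambda>h. 0)"
    using differential_zero_maxmin[of x UNIV r] assms
    by (simp add: frechet_derivative_works[symmetric])
  then show ?thesis
    by (simp add: pderiv_at_def)
qed

lemma out_state_pure:
  "out_state Y (ketbra psi0 psi0) x = (\<Sum>k\<in>UNIV. ketbra (Y k x *v psi0) (Y k x *v psi0))"
  by (simp add: out_state_def ketbra_sandwich)

lemma pderiv_out_state_pure:
  assumes "\<And>k. Y k differentiable (at x)"
  shows "pderiv_at (out_state Y (ketbra psi0 psi0)) x j
    = (\<Sum>k\<in>UNIV. ketbra (Y k x *v psi0) (pderiv_at (Y k) x j *v psi0)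
                 + ketbra (pderiv_at (Y k) x j *v psi0) (Y k x *v psi0))"
proof -
  have vec_diff: "(\<lambda>y. Y k y *v psi0) differentiable (at x)" for k
    using differentiable_linear[OF bounded_linear_mult_vec_left assms] .
  have "out_state Y (ketbra psi0 psi0) = (\<lambda>y. \<Sum>k\<in>UNIV. ketbra (Y k y *v psi0) (Y k y *v psi0))"
    by (simp add: fun_eq_iff out_state_pure)
  then have "pderiv_at (out_state Y (ketbra psi0 psi0)) x j
      = (\<Sum>k\<in>UNIV. pderiv_at (\<lambda>y. ketbra (Y k y *v psi0) (Y k y *v psi0)) x j)"
    by (simp only:) (rule pderiv_at_sum,
        simp_all add: differentiable_bilinear[OF bounded_bilinear_ketbra vec_diff vec_diff])
  also have "\<dots> = (\<Sum>k\<in>UNIV. ketbra (Y k x *v psi0) (pderiv_at (\<lambda>y. Y k y *v psi0) x j)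
                 + ketbra (pderiv_at (\<lambda>y. Y k y *v psi0) x j) (Y k x *v psi0))"
    by (intro sum.cong refl pderiv_at_bilinear[OF bounded_bilinear_ketbra vec_diff vec_diff])
  finally show ?thesis
    unfolding pderiv_at_linear[OF bounded_linear_mult_vec_left assms] .
qed

lemma SM_bound_pure:
  "SM_bound Y (ketbra psi0 psi0) x
     = (\<chi> j k. 4 * (\<Sum>l\<in>UNIV. Re (braket (pderiv_at (Y l) x k *v psi0) (pderiv_at (Y l) x j *v psi0))))"
  by (simp add: SM_bound_def ketbra_sandwich ctrace_ketbra)

subsection \<open>Canonical Kraus operators\<close>

locale canonical_kraus =
  fixes Y :: "'n::finite \<Rightarrow> real^'m \<Rightarrow> complex^'n^'n"
    and psi0 :: "complex^'n"
    and w :: "'n \<Rightarrow> real^'m \<Rightarrow> complex^'n"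
    and p :: "'n \<Rightarrow> real^'m \<Rightarrow> real"
  assumes Y_diff: "\<And>k x. Y k differentiable (at x)"
    and canonical: "\<And>x j k. ctrace (Y k x ** ketbra psi0 psi0 ** cadj (Y j x))
                              = (if j = k then complex_of_real (p k x) else 0)"
    and w_orthonormal: "\<And>x j k. braket (w j x) (w k x) = (if j = k then 1 else 0)"
    and w_diff: "\<And>k x. w k differentiable (at x)"
    and w_def: "\<And>k x. p k x > 0 \<Longrightarrow>
                   w k x = complex_of_real (1 / sqrt (p k x)) *s (Y k x *v psi0)"
begin

lemma braket_kraus_vec_self: "braket (Y c x *v psi0) (Y c x *v psi0) = of_real (p c x)"
  using canonical[where x=x and j=c and k=c] by (simp add: ketbra_sandwich ctrace_ketbra)

lemma weight_nonneg: "0 \<le> p c x"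
  using braket_self_nonneg[of "Y c x *v psi0"] by (simp add: braket_kraus_vec_self)

lemma kraus_vec_eq: "Y c x *v psi0 = of_real (sqrt (p c x)) *s w c x"
proof (cases "p c x > 0")
  case True
  then show ?thesis
    by (simp add: w_def vec_eq_iff)
next
  case False
  then have "p c x = 0"
    using weight_nonneg[of c x] by simp
  then show ?thesis
    using braket_kraus_vec_self[of c x] by (simp add: braket_self_eq_0_iff)
qed

lemma sqrt_weight_eq: "sqrt (p c x) = Re (braket (w c x) (Y c x *v psi0))"
  using w_orthonormal[where x=x and j=c and k=c] by (simp add: kraus_vec_eq braket_smult_right)

lemma sqrt_weight_differentiable: "(\<lambda>y. sqrt (p c y)) differentiable (at x)"
  unfolding sqrt_weight_eq
  by (intro differentiable_linear[OF bounded_linear_Re]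
      differentiable_bilinear[OF bounded_bilinear_braket]
      differentiable_linear[OF bounded_linear_mult_vec_left] w_diff Y_diff)

lemma pderiv_kraus_vec:
  "pderiv_at (Y c) x j *v psi0
     = of_real (sqrt (p c x)) *s pderiv_at (w c) x j
       + of_real (pderiv_at (\<lambda>y. sqrt (p c y)) x j) *s w c x"
proof -
  have "pderiv_at (Y c) x j *v psi0 = pderiv_at (\<lambda>y. Y c y *v psi0) x j"
    by (rule pderiv_at_linear[OF bounded_linear_mult_vec_left Y_diff, symmetric])
  also have "\<dots> = pderiv_at (\<lambda>y. sqrt (p c y) *\<^sub>R w c y) x j"
    by (simp add: kraus_vec_eq smult_of_real)
  also have "\<dots> = sqrt (p c x) *\<^sub>R pderiv_at (w c) x j + pderiv_at (\<lambda>y. sqrt (p c y)) x j *\<^sub>R w c x"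
    by (rule pderiv_at_bilinear[OF bounded_bilinear_scaleR sqrt_weight_differentiable w_diff])
  finally show ?thesis
    by (simp add: smult_of_real)
qed

text \<open>\<open>sqrt (p c)\<close> is nonnegative, so it is minimal wherever \<open>p c\<close> vanishes.\<close>
lemma pderiv_sqrt_weight_vanish: "p c x = 0 \<Longrightarrow> pderiv_at (\<lambda>y. sqrt (p c y)) x j = 0"
  by (rule pderiv_at_minimum[OF _ sqrt_weight_differentiable]) (simp add: weight_nonneg)

lemma basis_pderiv_skew:
  "braket (w a x) (pderiv_at (w c) x j) + braket (pderiv_at (w a) x j) (w c x) = 0"
proof -
  have "pderiv_at (\<lambda>y. braket (w a y) (w c y)) x j = 0"
    by (rule pderiv_at_const) (rule w_orthonormal)
  then show ?thesis
    by (simp add: pderiv_at_bilinear[OF bounded_bilinear_braket w_diff w_diff])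
qed

lemma spectral_derivative:
  "spectral_derivative (\<lambda>a. w a x) (\<lambda>a. p a x) (\<lambda>j a. pderiv_at (w a) x j)
     (\<lambda>j a. pderiv_at (\<lambda>y. sqrt (p a y)) x j)"
  by unfold_locales
    (simp_all add: w_orthonormal weight_nonneg basis_pderiv_skew pderiv_sqrt_weight_vanish)

end

theorem lemma8:
  fixes E :: "nat \<Rightarrow> real^'m \<Rightarrow> complex^'n^'n" and nE :: nat
    and Y :: "'n \<Rightarrow> real^'m \<Rightarrow> complex^'n^'n"
    and psi0 :: "complex^'n"
    and w :: "'n \<Rightarrow> real^'m \<Rightarrow> complex^'n"
    and p :: "'n \<Rightarrow> real^'m \<Rightarrow> real"
    and lam :: "'m \<Rightarrow> complex^'n^'n"
    and \<theta> :: "real^'m"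
  assumes psi0_norm: "braket psi0 psi0 = 1"
    and E_diff: "\<And>k x. k < nE \<Longrightarrow> E k differentiable (at x)"
    and E_complete: "\<And>x. (\<Sum>k<nE. cadj (E k x) ** E k x) = mat 1"
    and same_channel: "\<And>x rho. (\<Sum>k\<in>UNIV. Y k x ** rho ** cadj (Y k x))
                                = (\<Sum>k<nE. E k x ** rho ** cadj (E k x))"
    and Y_diff: "\<And>k x. Y k differentiable (at x)"
    and canonical: "\<And>x j k. ctrace (Y k x ** ketbra psi0 psi0 ** cadj (Y j x))
                              = (if j = k then complex_of_real (p k x) else 0)"
    and w_orthonormal: "\<And>x j k. braket (w j x) (w k x) = (if j = k then 1 else 0)"
    and w_diff: "\<And>k x. w k differentiable (at x)"
    and w_def: "\<And>k x. p k x > 0 \<Longrightarrow>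
                   w k x = complex_of_real (1 / sqrt (p k x)) *s (Y k x *v psi0)"
    and out_decomp: "\<And>x. out_state Y (ketbra psi0 psi0) x
                          = (\<Sum>k\<in>UNIV. p k x *\<^sub>R ketbra (w k x) (w k x))"
    and lam_sa: "\<And>j. cadj (lam j) = lam j"
    and lam_SLD: "\<And>j. pderiv_at (out_state Y (ketbra psi0 psi0)) \<theta> j
        = (1/2::real) *\<^sub>R (out_state Y (ketbra psi0 psi0) \<theta> ** lam j
                            + lam j ** out_state Y (ketbra psi0 psi0) \<theta>)"
  shows "SLD_info (out_state Y (ketbra psi0 psi0) \<theta>) lam = SM_bound Y (ketbra psi0 psi0) \<theta>
     \<longleftrightarrow> (\<forall>j k l. p j \<theta> > 0 \<and> p k \<theta> > 0 \<longrightarrow>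
              braket (pderiv_at (w j) \<theta> l) (w k \<theta>) = 0)"
proof -
  interpret K: canonical_kraus Y psi0 w p
    using Y_diff canonical w_orthonormal w_diff w_def by unfold_locales
  interpret S: spectral_derivative "\<lambda>a. w a \<theta>" "\<lambda>a. p a \<theta>" "\<lambda>j a. pderiv_at (w a) \<theta> j"
      "\<lambda>j a. pderiv_at (\<lambda>x. sqrt (p a x)) \<theta> j"
    by (rule K.spectral_derivative)
  have state: "out_state Y (ketbra psi0 psi0) \<theta> = S.state"
    by (simp add: out_state_pure S.state_def S.kraus_vec_def K.kraus_vec_eq)
  have state_deriv: "pderiv_at (out_state Y (ketbra psi0 psi0)) \<theta> j = S.state_deriv j" for j
    by (simp add: pderiv_out_state_pure[OF Y_diff] S.state_deriv_def S.kraus_vec_def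
        S.kraus_vec_deriv_def K.kraus_vec_eq K.pderiv_kraus_vec)
  interpret L: sld_spectral "\<lambda>a. w a \<theta>" "\<lambda>a. p a \<theta>" "\<lambda>j a. pderiv_at (w a) \<theta> j"
      "\<lambda>j a. pderiv_at (\<lambda>x. sqrt (p a x)) \<theta> j" lam
    using lam_sa lam_SLD unfolding state state_deriv by unfold_locales
  have SM: "SM_bound Y (ketbra psi0 psi0) \<theta>
      = (\<chi> j k. 4 * (\<Sum>c\<in>UNIV. Re (braket (S.kraus_vec_deriv k c) (S.kraus_vec_deriv j c))))"
    by (simp add: SM_bound_pure S.kraus_vec_deriv_def K.pderiv_kraus_vec)
  have connection: "braket (pderiv_at (w j) \<theta> l) (w k \<theta>) = cnj (S.connection l k j)" for j k l
    by (simp add: S.connection_def cnj_braket)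
  show ?thesis
    unfolding state SM L.SLD_info_eq_SM_iff connection by auto
qed

end
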